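(* Let $G=K\rtimes_\phi H$ be a finite Frobenius group with kernel $K$ and complement $H$, where $\phi:H\to\mathrm{Aut}(K)$ is the action, $H$ is identified with a subgroup of $G$, and $\pi:G\to H$ is the quotient map with kernel $K$. Let $\sigma\in\mathrm{Aut}(K)$ and $\gamma\in\mathrm{Aut}(H)$. Then there exists $\alpha\in\mathrm{Aut}(G)$ with $\alpha|_K=\sigma$ and $\pi\circ\alpha|_H=\gamma$ if and only if for every $h\in H$ the automorphism $\sigma\circ\phi(h)\circ\sigma^{-1}\circ\phi(\gamma(h))^{-1}$ of $K$ lies in $\mathrm{Inn}(K)$.
   Context: A finite group $G=K\rtimes_\phi H$ with $K,H$ nontrivial is a Frobenius group with kernel $K$ and complement $H$ if for every $h\in H$, $h\neq1$, the automorphism $\phi(h)$ fixes no nonidentity element of $K$. $\mathrm{Inn}(K)$ denotes the group of inner automorphisms of $K$. *)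

theory Defs
  imports "HOL-Algebra.Algebra"
begin

definition semidirect_prod ::
  "('a, 'c) monoid_scheme \<Rightarrow> ('b, 'd) monoid_scheme \<Rightarrow> ('b \<Rightarrow> 'a \<Rightarrow> 'a) \<Rightarrow> ('a \<times> 'b) monoid"
  where "semidirect_prod K H phi =
    \<lparr>carrier = carrier K \<times> carrier H,
     monoid.mult = (\<lambda>(k1, h1) (k2, h2). (k1 \<otimes>\<^bsub>K\<^esub> phi h1 k2, h1 \<otimes>\<^bsub>H\<^esub> h2)),
     one = (\<one>\<^bsub>K\<^esub>, \<one>\<^bsub>H\<^esub>)\<rparr>"

text \<open>phi is an action of H on K by automorphisms making K \<rtimes>_phi H a finite
  Frobenius group with kernel K and complement H (both nontrivial).\<close>
definition frobenius_action ::
  "('a, 'c) monoid_scheme \<Rightarrow> ('b, 'd) monoid_scheme \<Rightarrow> ('b \<Rightarrow> 'a \<Rightarrow> 'a) \<Rightarrow> bool"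
  where "frobenius_action K H phi \<longleftrightarrow>
    group K \<and> group H \<and> finite (carrier K) \<and> finite (carrier H) \<and>
    carrier K \<noteq> {\<one>\<^bsub>K\<^esub>} \<and> carrier H \<noteq> {\<one>\<^bsub>H\<^esub>} \<and>
    phi \<in> hom H (AutoGroup K) \<and>
    (\<forall>h \<in> carrier H. h \<noteq> \<one>\<^bsub>H\<^esub> \<longrightarrow>
       (\<forall>k \<in> carrier K. phi h k = k \<longrightarrow> k = \<one>\<^bsub>K\<^esub>))"

definition Inn :: "('a, 'c) monoid_scheme \<Rightarrow> ('a \<Rightarrow> 'a) set"
  where "Inn K = {(\<lambda>x \<in> carrier K. g \<otimes>\<^bsub>K\<^esub> x \<otimes>\<^bsub>K\<^esub> inv\<^bsub>K\<^esub> g) | g. g \<in> carrier K}"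

end

theory Submission
  imports Defs
begin

(*
  An automorphism \<alpha> with \<alpha>|K = \<sigma> and \<pi> \<circ> \<alpha>|H = \<gamma> has the form
  \<alpha>(k, h) = (\<sigma>(k) c(h), \<gamma>(h)), and it respects the relation h k h\<inverse> = \<phi>(h)(k) exactly when
  \<sigma> \<phi>(h) \<sigma>\<inverse> = \<iota>(c(h)) \<phi>(\<gamma> h) for all h, where \<iota> denotes conjugation, and
  c(a b) = c(a) \<psi>(a)(c(b)) for the twisted action \<psi> = \<phi> \<circ> \<gamma>. So the condition is necessary.
  Conversely, choose such conjugators g(h) one h at a time. They are unique up to the centre Z(K),
  so g fails to be a crossed homomorphism only by a 2-cocycle with values in Z(K). Since H acts
  freely on K - {1}, |H| divides |K| - 1 and is therefore invertible modulo the exponent of Z(K);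
  averaging over H shows that the cocycle is a coboundary, and correcting g by it gives c.
*)

lemma carrier_semidirect_prod [simp]:
  "carrier (semidirect_prod K H phi) = carrier K \<times> carrier H"
  by (simp add: semidirect_prod_def)

lemma mult_semidirect_prod [simp]:
  "(k1, h1) \<otimes>\<^bsub>semidirect_prod K H phi\<^esub> (k2, h2) = (k1 \<otimes>\<^bsub>K\<^esub> phi h1 k2, h1 \<otimes>\<^bsub>H\<^esub> h2)"
  by (simp add: semidirect_prod_def)

definition center :: "('a, 'b) monoid_scheme \<Rightarrow> 'a set"
  where "center G = {z \<in> carrier G. \<forall>x \<in> carrier G. z \<otimes>\<^bsub>G\<^esub> x = x \<otimes>\<^bsub>G\<^esub> z}"

context group
begin

lemma inv_mult_cancel_left [simp]: "x \<in> carrier G \<Longrightarrow> y \<in> carrier G \<Longrightarrow> inv x \<otimes> (x \<otimes> y) = y"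
  by (simp add: m_assoc [symmetric])

lemma mult_inv_cancel_left [simp]: "x \<in> carrier G \<Longrightarrow> y \<in> carrier G \<Longrightarrow> x \<otimes> (inv x \<otimes> y) = y"
  by (simp add: m_assoc [symmetric])

lemma pow_order_minus_one:
  assumes "finite (carrier G)" "x \<in> carrier G"
  shows "x [^] (order G - 1) = inv x"
proof (rule inv_equality[symmetric])
  have "order G \<ge> 1"
    using assms(1) one_closed by (auto simp: order_def Suc_le_eq card_gt_0_iff)
  then show "x [^] (order G - 1) \<otimes> x = \<one>"
    using assms(2) pow_order_eq_1[OF assms(2)] by (simp add: nat_pow_Suc[symmetric] del: nat_pow_Suc)
qed (use assms in simp_all)

lemma center_closed: "z \<in> center G \<Longrightarrow> z \<in> carrier G"
  by (simp add: center_def)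

lemma center_commute: "z \<in> center G \<Longrightarrow> x \<in> carrier G \<Longrightarrow> z \<otimes> x = x \<otimes> z"
  by (simp add: center_def)

lemma subgroup_center: "subgroup (center G) G"
proof (rule subgroupI)
  fix a b assume a: "a \<in> center G" and b: "b \<in> center G"
  have a_closed: "a \<in> carrier G" and b_closed: "b \<in> carrier G"
    using a b by (simp_all add: center_closed)
  have "inv a \<otimes> x = x \<otimes> inv a" if x: "x \<in> carrier G" for x
  proof -
    have "inv a \<otimes> x = inv a \<otimes> (x \<otimes> a) \<otimes> inv a"
      using a_closed x by (simp add: m_assoc)
    also have "\<dots> = x \<otimes> inv a"
      using a_closed x by (simp add: center_commute[OF a x, symmetric])
    finally show ?thesis .
  qed
  then show "inv a \<in> center G"
    using a_closed by (simp add: center_def)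
  have "a \<otimes> b \<otimes> x = x \<otimes> (a \<otimes> b)" if x: "x \<in> carrier G" for x
    using a_closed b_closed x center_commute[OF a x] center_commute[OF b x]
    by (metis m_assoc)
  then show "a \<otimes> b \<in> center G"
    using a_closed b_closed by (simp add: center_def)
qed (auto simp: center_def)

lemma comm_group_center: "comm_group (G\<lparr>carrier := center G\<rparr>)"
proof -
  interpret Z: group "G\<lparr>carrier := center G\<rparr>"
    by (rule subgroup.subgroup_is_group[OF subgroup_center is_group])
  show ?thesis
    by (rule Z.group_comm_groupI) (simp add: center_commute center_closed)
qed

lemma mult_inv_in_center_if_conj_eq:
  assumes u: "u \<in> carrier G" and w: "w \<in> carrier G"
    and conj_eq: "\<And>x. x \<in> carrier G \<Longrightarrow> u \<otimes> x \<otimes> inv u = w \<otimes> x \<otimes> inv w"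
  shows "u \<otimes> inv w \<in> center G"
proof -
  have "u \<otimes> inv w \<otimes> x = x \<otimes> (u \<otimes> inv w)" if x: "x \<in> carrier G" for x
  proof -
    have "u \<otimes> (inv w \<otimes> x \<otimes> w) \<otimes> inv u = w \<otimes> (inv w \<otimes> x \<otimes> w) \<otimes> inv w"
      using conj_eq w x by simp
    then have "u \<otimes> inv w \<otimes> x \<otimes> inv (u \<otimes> inv w) = x"
      using u w x by (simp add: inv_mult_group m_assoc)
    then show ?thesis
      using u w x by (simp add: inv_solve_right')
  qed
  then show ?thesis
    using u w by (simp add: center_def)
qed

lemma conj_center_mult:
  assumes "z \<in> center G" "g \<in> carrier G" "x \<in> carrier G"
  shows "z \<otimes> g \<otimes> x \<otimes> inv (z \<otimes> g) = g \<otimes> x \<otimes> inv g"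
proof -
  have "z \<otimes> g \<otimes> x \<otimes> inv (z \<otimes> g) = z \<otimes> (g \<otimes> x \<otimes> inv g) \<otimes> inv z"
    using assms center_closed[OF assms(1)] by (simp add: inv_mult_group m_assoc)
  also have "\<dots> = g \<otimes> x \<otimes> inv g"
    using assms center_closed[OF assms(1)] center_commute[OF assms(1), of "g \<otimes> x \<otimes> inv g"]
    by (simp add: m_assoc)
  finally show ?thesis .
qed

lemma hom_center_closed:
  assumes f: "f \<in> hom G G" "f ` carrier G = carrier G" and z: "z \<in> center G"
  shows "f z \<in> center G"
proof -
  have z_closed: "z \<in> carrier G"
    using z by (rule center_closed)
  have "f z \<otimes> x = x \<otimes> f z" if "x \<in> carrier G" for x
  proof -
    obtain y where y: "y \<in> carrier G" "x = f y"
      using f(2) \<open>x \<in> carrier G\<close> by blast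
    have "f z \<otimes> f y = f (z \<otimes> y)"
      using f(1) y z_closed by (simp add: hom_mult)
    also have "\<dots> = f (y \<otimes> z)"
      using center_commute[OF z y(1)] by simp
    also have "\<dots> = f y \<otimes> f z"
      using f(1) y z_closed by (simp add: hom_mult)
    finally show ?thesis
      using y by simp
  qed
  then show ?thesis
    using f(1) z_closed by (simp add: center_def hom_in_carrier)
qed

end

lemma (in group) group_action_if_hom_AutoGroup:
  assumes "group H" "phi \<in> hom H (AutoGroup G)"
  shows "group_action H (carrier G) phi"
proof -
  have "phi \<in> hom H (BijGroup (carrier G))"
    using assms(2) by (auto simp: hom_def AutoGroup_def BijGroup_def auto_def)
  then show ?thesis
    by (simp add: group_action_def group_hom_def group_hom_axioms_def assms(1) group_BijGroup)
qed

lemma (in group_action) card_orbit_if_free: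
  assumes x: "x \<in> E" and free: "\<And>g. g \<in> carrier G \<Longrightarrow> \<phi> g x = x \<Longrightarrow> g = \<one>"
  shows "card (orbit G \<phi> x) = order G"
proof -
  interpret G: group G
    using group_hom group_hom.axioms(1) by blast
  have "stabilizer G \<phi> x = {\<one>}"
    using free x id_eq_one[symmetric] by (auto simp: stabilizer_def)
  then show ?thesis
    using orbit_stabilizer_theorem[OF x] by simp
qed

lemma (in group_action) orbit_disjoint_fixed_points:
  assumes x: "x \<in> E - F" and fixed: "\<And>g y. g \<in> carrier G \<Longrightarrow> y \<in> F \<Longrightarrow> \<phi> g y = y"
  shows "orbit G \<phi> x \<inter> F = {}"
proof -
  interpret G: group G
    using group_hom group_hom.axioms(1) by blast
  have "\<phi> g x \<notin> F" if g: "g \<in> carrier G" for g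
  proof
    assume "\<phi> g x \<in> F"
    moreover have "\<phi> (inv\<^bsub>G\<^esub> g) (\<phi> g x) = x"
      using composition_rule[of x "inv\<^bsub>G\<^esub> g" g] x g id_eq_one[symmetric] by simp
    ultimately show False
      using fixed[of "inv\<^bsub>G\<^esub> g" "\<phi> g x"] x g by simp
  qed
  then show ?thesis
    by (auto simp: orbit_def)
qed

lemma (in group_action) order_dvd_card_of_free_part:
  assumes "finite E"
    and fixed: "\<And>g x. g \<in> carrier G \<Longrightarrow> x \<in> F \<Longrightarrow> \<phi> g x = x"
    and free: "\<And>g x. g \<in> carrier G \<Longrightarrow> x \<in> E - F \<Longrightarrow> \<phi> g x = x \<Longrightarrow> g = \<one>"
  shows "order G dvd card (E - F)"
proof -
  interpret G: group G
    using group_hom group_hom.axioms(1) by blast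
  let ?w = "\<lambda>x. if x \<in> F then 0 else 1 :: nat"
  have orbit_dvd: "order G dvd (\<Sum>x\<in>orbit G \<phi> x. ?w x)" if x: "x \<in> E" for x
  proof (cases "x \<in> F")
    case True
    then have "orbit G \<phi> x = {x}"
      using fixed G.one_closed unfolding orbit_def by force
    then show ?thesis
      using True by simp
  next
    case False
    then have "(\<Sum>y\<in>orbit G \<phi> x. ?w y) = card (orbit G \<phi> x)"
      using orbit_disjoint_fixed_points[of x F] x fixed by (simp add: disjoint_iff)
    also have "\<dots> = order G"
      using card_orbit_if_free[OF x] free[of _ x] x False by blast
    finally show ?thesis
      by simp
  qed
  have "order G dvd (\<Sum>orb\<in>orbits G E \<phi>. \<Sum>x\<in>orb. ?w x)"
    by (rule dvd_sum) (auto simp: orbits_def orbit_dvd)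
  also have "\<dots> = (\<Sum>x\<in>E. ?w x)"
    using disjoint_sum[OF assms(1), of ?w] .
  also have "\<dots> = card (E - F)"
    using assms(1) by (simp add: sum.If_cases Diff_eq)
  finally show ?thesis .
qed

lemma (in comm_group) hom_finprod:
  assumes h: "h \<in> hom G G" and f: "f \<in> A \<rightarrow> carrier G"
  shows "h (finprod G f A) = finprod G (h \<circ> f) A"
  using f
proof (induction A rule: infinite_finite_induct)
  case (insert a A)
  then show ?case
    using h by (simp add: Pi_def hom_mult hom_in_carrier)
qed (use h group_hom.hom_one[of G G h] in \<open>simp_all add: group_hom_def group_hom_axioms_def\<close>)

lemma (in comm_group) two_cocycle_average:
  assumes "group H" "finite (carrier H)"
    and act: "\<And>a. a \<in> carrier H \<Longrightarrow> \<psi> a \<in> hom G G"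
    and f: "\<And>a b. a \<in> carrier H \<Longrightarrow> b \<in> carrier H \<Longrightarrow> f a b \<in> carrier G"
    and cocycle: "\<And>a b c. a \<in> carrier H \<Longrightarrow> b \<in> carrier H \<Longrightarrow> c \<in> carrier H \<Longrightarrow>
      \<psi> a (f b c) \<otimes> f a (b \<otimes>\<^bsub>H\<^esub> c) = f a b \<otimes> f (a \<otimes>\<^bsub>H\<^esub> b) c"
    and a: "a \<in> carrier H" and b: "b \<in> carrier H"
  shows "\<psi> a (finprod G (f b) (carrier H)) \<otimes> finprod G (f a) (carrier H)
    = f a b [^] order H \<otimes> finprod G (f (a \<otimes>\<^bsub>H\<^esub> b)) (carrier H)"
proof -
  interpret H: group H by fact
  have act_closed: "\<psi> a x \<in> carrier G" if "x \<in> carrier G" for x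
    using hom_in_carrier[OF act[OF a]] that .
  have "finprod G (f a) (carrier H) = finprod G (f a) ((\<lambda>c. b \<otimes>\<^bsub>H\<^esub> c) ` carrier H)"
    using H.surj_const_mult[OF b] by simp
  also have "\<dots> = finprod G (\<lambda>c. f a (b \<otimes>\<^bsub>H\<^esub> c)) (carrier H)"
    using a b f H.inj_on_cmult[OF b] by (intro finprod_reindex) auto
  finally have "\<psi> a (finprod G (f b) (carrier H)) \<otimes> finprod G (f a) (carrier H)
      = finprod G (\<lambda>c. \<psi> a (f b c)) (carrier H) \<otimes> finprod G (\<lambda>c. f a (b \<otimes>\<^bsub>H\<^esub> c)) (carrier H)"
    using a b f act hom_finprod[of "\<psi> a" "f b" "carrier H"] by (simp add: Pi_def comp_def)
  also have "\<dots> = finprod G (\<lambda>c. \<psi> a (f b c) \<otimes> f a (b \<otimes>\<^bsub>H\<^esub> c)) (carrier H)"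
    by (rule finprod_multf[symmetric]) (use a b f act_closed in auto)
  also have "\<dots> = finprod G (\<lambda>c. f a b \<otimes> f (a \<otimes>\<^bsub>H\<^esub> b) c) (carrier H)"
    using a b f by (intro finprod_cong') (auto simp: cocycle)
  also have "\<dots> = f a b [^] order H \<otimes> finprod G (f (a \<otimes>\<^bsub>H\<^esub> b)) (carrier H)"
    using a b f by (simp add: Pi_def finprod_const order_def)
  finally show ?thesis .
qed

text \<open>The exponent hypothesis says that \<open>-q\<close> inverts the order of \<open>H\<close> modulo the
  exponent of \<open>G\<close>.\<close>

lemma (in comm_group) two_cocycle_is_coboundary:
  assumes "group H" "finite (carrier H)"
    and act: "\<And>a. a \<in> carrier H \<Longrightarrow> \<psi> a \<in> hom G G"
    and f: "\<And>a b. a \<in> carrier H \<Longrightarrow> b \<in> carrier H \<Longrightarrow> f a b \<in> carrier G"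
    and cocycle: "\<And>a b c. a \<in> carrier H \<Longrightarrow> b \<in> carrier H \<Longrightarrow> c \<in> carrier H \<Longrightarrow>
      \<psi> a (f b c) \<otimes> f a (b \<otimes>\<^bsub>H\<^esub> c) = f a b \<otimes> f (a \<otimes>\<^bsub>H\<^esub> b) c"
    and exponent: "\<And>x. x \<in> carrier G \<Longrightarrow> x [^] (order H * q) = inv x"
  obtains z where "\<And>a. a \<in> carrier H \<Longrightarrow> z a \<in> carrier G"
    and "\<And>a b. a \<in> carrier H \<Longrightarrow> b \<in> carrier H \<Longrightarrow>
      z (a \<otimes>\<^bsub>H\<^esub> b) = f a b \<otimes> \<psi> a (z b) \<otimes> z a"
proof -
  interpret H: group H by fact
  define F where "F a = finprod G (f a) (carrier H)" for a
  have F_closed: "F a \<in> carrier G" if "a \<in> carrier H" for a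
    using f that by (simp add: F_def Pi_def)
  show thesis
  proof (rule that)
    show "F a [^] q \<in> carrier G" if "a \<in> carrier H" for a
      using F_closed that by simp
    fix a b assume a: "a \<in> carrier H" and b: "b \<in> carrier H"
    define P Q R where "P = \<psi> a (F b)" and "Q = F a" and "R = F (a \<otimes>\<^bsub>H\<^esub> b)"
    have closed: "P \<in> carrier G" "Q \<in> carrier G" "R \<in> carrier G" "f a b \<in> carrier G"
      using a b f F_closed hom_in_carrier[OF act[OF a]] by (simp_all add: P_def Q_def R_def)
    have "P \<otimes> Q = f a b [^] order H \<otimes> R"
      using two_cocycle_average[of H \<psi> f a b, OF assms(1-4) cocycle a b] by (simp add: P_def Q_def R_def F_def)
    then have power: "f a b [^] order H = P \<otimes> Q \<otimes> inv R"
      using closed by (simp add: inv_solve_right)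
    have "inv (f a b) = (f a b [^] order H) [^] q"
      using exponent[of "f a b"] closed by (simp add: nat_pow_pow)
    also have "\<dots> = (P \<otimes> Q \<otimes> inv R) [^] q"
      by (simp only: power)
    also have "\<dots> = P [^] q \<otimes> Q [^] q \<otimes> inv (R [^] q)"
      using closed by (simp add: nat_pow_distrib nat_pow_inv)
    finally have "P [^] q \<otimes> Q [^] q = inv (f a b) \<otimes> R [^] q"
      using closed by (simp add: inv_solve_right)
    then have "R [^] q = f a b \<otimes> (P [^] q \<otimes> Q [^] q)"
      using closed by (simp add: inv_solve_left)
    moreover have "P [^] q = \<psi> a (F b [^] q)"
      using hom_nat_pow[OF act[OF a] _ is_group is_group] F_closed b by (simp add: P_def)
    ultimately show "F (a \<otimes>\<^bsub>H\<^esub> b) [^] q = f a b \<otimes> \<psi> a (F b [^] q) \<otimes> F a [^] q"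
      using closed hom_in_carrier[OF act[OF a]] F_closed[OF b] by (simp add: Q_def R_def m_assoc)
  qed
qed

locale frobenius_automorphisms =
  fixes K :: "('a, 'c) monoid_scheme" (structure) and H :: "('b, 'd) monoid_scheme"
    and phi :: "'b \<Rightarrow> 'a \<Rightarrow> 'a" and \<sigma> :: "'a \<Rightarrow> 'a" and \<gamma> :: "'b \<Rightarrow> 'b"
  assumes frobenius: "frobenius_action K H phi"
    and \<sigma>_iso: "\<sigma> \<in> iso K K" and \<gamma>_iso: "\<gamma> \<in> iso H H"

sublocale frobenius_automorphisms \<subseteq> group K
  using frobenius by (simp add: frobenius_action_def)

sublocale frobenius_automorphisms \<subseteq> H: group H
  using frobenius by (simp add: frobenius_action_def)

sublocale frobenius_automorphisms \<subseteq> phi: group_action H "carrier K" phi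
  using frobenius by (intro group_action_if_hom_AutoGroup) (simp_all add: frobenius_action_def)

context frobenius_automorphisms
begin

lemma phi_group_hom:
  assumes "h \<in> carrier H"
  shows "group_hom K K (phi h)"
proof -
  have "phi h \<in> auto K"
    using frobenius hom_in_carrier[of phi H "AutoGroup K" h] assms
    by (simp add: frobenius_action_def AutoGroup_def)
  then show ?thesis
    by (simp add: group_hom_def group_hom_axioms_def auto_def)
qed

lemma phi_closed [simp]: "h \<in> carrier H \<Longrightarrow> x \<in> carrier K \<Longrightarrow> phi h x \<in> carrier K"
  using group_hom.hom_closed[OF phi_group_hom] .

lemma phi_mult [simp]:
  "h \<in> carrier H \<Longrightarrow> x \<in> carrier K \<Longrightarrow> y \<in> carrier K \<Longrightarrow> phi h (x \<otimes> y) = phi h x \<otimes> phi h y"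
  using group_hom.hom_mult[OF phi_group_hom] .

lemma phi_inv [simp]: "h \<in> carrier H \<Longrightarrow> x \<in> carrier K \<Longrightarrow> phi h (inv x) = inv (phi h x)"
  using group_hom.hom_inv[OF phi_group_hom] .

lemma phi_one [simp]: "h \<in> carrier H \<Longrightarrow> phi h \<one> = \<one>"
  using group_hom.hom_one[OF phi_group_hom] .

lemma phi_H_one [simp]: "x \<in> carrier K \<Longrightarrow> phi \<one>\<^bsub>H\<^esub> x = x"
  by (simp flip: phi.id_eq_one)

lemma order_H_dvd_order_K_minus_one: "order H dvd order K - 1"
proof -
  have "order H dvd card (carrier K - {\<one>})"
  proof (rule phi.order_dvd_card_of_free_part)
    show "finite (carrier K)"
      using frobenius by (simp add: frobenius_action_def)
    show "phi g x = x" if "g \<in> carrier H" "x \<in> {\<one>}" for g x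
      using that by simp
    show "g = \<one>\<^bsub>H\<^esub>" if "g \<in> carrier H" "x \<in> carrier K - {\<one>}" "phi g x = x" for g x
      using frobenius that by (auto simp: frobenius_action_def)
  qed
  then show ?thesis
    by (simp add: order_def)
qed

lemma \<sigma>_hom: "\<sigma> \<in> hom K K"
  using \<sigma>_iso by (simp add: iso_iff)

lemma \<sigma>_closed [simp]: "x \<in> carrier K \<Longrightarrow> \<sigma> x \<in> carrier K"
  using hom_in_carrier[OF \<sigma>_hom] .

lemma \<sigma>_mult [simp]: "x \<in> carrier K \<Longrightarrow> y \<in> carrier K \<Longrightarrow> \<sigma> (x \<otimes> y) = \<sigma> x \<otimes> \<sigma> y"
  using hom_mult[OF \<sigma>_hom] .

lemma \<gamma>_hom: "\<gamma> \<in> hom H H"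
  using \<gamma>_iso by (simp add: iso_iff)

lemma \<gamma>_closed [simp]: "h \<in> carrier H \<Longrightarrow> \<gamma> h \<in> carrier H"
  using hom_in_carrier[OF \<gamma>_hom] .

lemma \<gamma>_mult [simp]: "a \<in> carrier H \<Longrightarrow> b \<in> carrier H \<Longrightarrow> \<gamma> (a \<otimes>\<^bsub>H\<^esub> b) = \<gamma> a \<otimes>\<^bsub>H\<^esub> \<gamma> b"
  using hom_mult[OF \<gamma>_hom] .

lemma \<gamma>_one [simp]: "\<gamma> \<one>\<^bsub>H\<^esub> = \<one>\<^bsub>H\<^esub>"
  using \<gamma>_hom by (intro group_hom.hom_one) (simp add: group_hom_def group_hom_axioms_def)

abbreviation psi :: "'b \<Rightarrow> 'a \<Rightarrow> 'a"
  where "psi h \<equiv> phi (\<gamma> h)"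

lemma psi_center_closed: "h \<in> carrier H \<Longrightarrow> z \<in> center K \<Longrightarrow> psi h z \<in> center K"
  using group_hom.homh[OF phi_group_hom] phi.surj_prop by (simp add: hom_center_closed)

lemma inv_into_\<sigma>_psi:
  assumes "h \<in> carrier H" "x \<in> carrier K"
  defines "y \<equiv> inv_into (carrier K) \<sigma> (inv_into (carrier K) (psi h) x)"
  shows "y \<in> carrier K" and "psi h (\<sigma> y) = x"
proof -
  have \<sigma>: "bij_betw \<sigma> (carrier K) (carrier K)" and psi: "bij_betw (psi h) (carrier K) (carrier K)"
    using \<sigma>_iso phi.bij_prop0[of "\<gamma> h"] assms(1) by (simp_all add: iso_def Bij_def)
  have "inv_into (carrier K) (psi h) x \<in> carrier K"
    using psi assms(2) by (metis bij_betw_apply bij_betw_inv_into)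
  then show "y \<in> carrier K"
    unfolding y_def using \<sigma> by (metis bij_betw_apply bij_betw_inv_into)
  show "psi h (\<sigma> y) = x"
    unfolding y_def using \<sigma> psi assms(2) \<open>inv_into (carrier K) (psi h) x \<in> carrier K\<close>
    by (simp add: bij_betw_inv_into_right)
qed

lemma inv_into_\<sigma>_psi_apply:
  assumes "h \<in> carrier H" "k \<in> carrier K"
  shows "inv_into (carrier K) \<sigma> (inv_into (carrier K) (psi h) (psi h (\<sigma> k))) = k"
proof -
  have "inj_on \<sigma> (carrier K)" "inj_on (psi h) (carrier K)"
    using \<sigma>_iso phi.inj_prop[of "\<gamma> h"] assms(1) by (simp_all add: iso_iff)
  then show ?thesis
    using assms by simp
qed

definition twisted_conjugator :: "'b \<Rightarrow> 'a \<Rightarrow> bool"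
  where "twisted_conjugator h c \<longleftrightarrow>
    c \<in> carrier K \<and> (\<forall>k \<in> carrier K. \<sigma> (phi h k) = c \<otimes> psi h (\<sigma> k) \<otimes> inv c)"

lemma Inn_iff_twisted_conjugator:
  assumes h: "h \<in> carrier H"
  shows "(\<lambda>k \<in> carrier K. \<sigma> (phi h (inv_into (carrier K) \<sigma> (inv_into (carrier K) (phi (\<gamma> h)) k))))
      \<in> Inn K \<longleftrightarrow> (\<exists>c. twisted_conjugator h c)"
  (is "?T \<in> Inn K \<longleftrightarrow> _")
proof
  assume "?T \<in> Inn K"
  then obtain c where c: "c \<in> carrier K" and T: "?T = (\<lambda>x \<in> carrier K. c \<otimes> x \<otimes> inv c)"
    by (auto simp: Inn_def)
  have "\<sigma> (phi h k) = c \<otimes> psi h (\<sigma> k) \<otimes> inv c" if "k \<in> carrier K" for k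
    using fun_cong[OF T, of "psi h (\<sigma> k)"] h that by (simp add: inv_into_\<sigma>_psi_apply)
  then show "\<exists>c. twisted_conjugator h c"
    using c by (auto simp: twisted_conjugator_def)
next
  assume "\<exists>c. twisted_conjugator h c"
  then obtain c where c: "twisted_conjugator h c" ..
  have "?T = (\<lambda>x \<in> carrier K. c \<otimes> x \<otimes> inv c)"
  proof
    fix x show "?T x = (\<lambda>x \<in> carrier K. c \<otimes> x \<otimes> inv c) x"
      using c inv_into_\<sigma>_psi[OF h, of x] by (auto simp: twisted_conjugator_def)
  qed
  then show "?T \<in> Inn K"
    using c by (auto simp: Inn_def twisted_conjugator_def)
qed

lemma twisted_conjugator_closed: "twisted_conjugator h c \<Longrightarrow> c \<in> carrier K"
  by (simp add: twisted_conjugator_def)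

lemma twisted_conjugator_mult:
  assumes a: "a \<in> carrier H" and b: "b \<in> carrier H"
    and u: "twisted_conjugator a u" and v: "twisted_conjugator b v"
  shows "twisted_conjugator (a \<otimes>\<^bsub>H\<^esub> b) (u \<otimes> psi a v)"
  unfolding twisted_conjugator_def
proof (intro conjI ballI)
  have uv: "u \<in> carrier K" "v \<in> carrier K"
    using u v by (simp_all add: twisted_conjugator_closed)
  then show "u \<otimes> psi a v \<in> carrier K"
    using a by simp
  fix k assume k: "k \<in> carrier K"
  have "\<sigma> (phi (a \<otimes>\<^bsub>H\<^esub> b) k) = u \<otimes> psi a (v \<otimes> psi b (\<sigma> k) \<otimes> inv v) \<otimes> inv u"
    using u v a b k by (simp add: phi.composition_rule twisted_conjugator_def)
  also have "\<dots> = u \<otimes> psi a v \<otimes> psi (a \<otimes>\<^bsub>H\<^esub> b) (\<sigma> k) \<otimes> inv (u \<otimes> psi a v)"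
    using uv a b k by (simp add: phi.composition_rule m_assoc inv_mult_group)
  finally show "\<sigma> (phi (a \<otimes>\<^bsub>H\<^esub> b) k) = u \<otimes> psi a v \<otimes> psi (a \<otimes>\<^bsub>H\<^esub> b) (\<sigma> k) \<otimes> inv (u \<otimes> psi a v)" .
qed

lemma twisted_conjugator_center_mult:
  "h \<in> carrier H \<Longrightarrow> twisted_conjugator h c \<Longrightarrow> z \<in> center K \<Longrightarrow> twisted_conjugator h (z \<otimes> c)"
  by (simp add: twisted_conjugator_def conj_center_mult center_closed)

lemma twisted_conjugator_unique_mod_center:
  assumes h: "h \<in> carrier H" and u: "twisted_conjugator h u" and v: "twisted_conjugator h v"
  shows "u \<otimes> inv v \<in> center K"
proof (rule mult_inv_in_center_if_conj_eq)
  show "u \<in> carrier K" "v \<in> carrier K"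
    using u v by (simp_all add: twisted_conjugator_closed)
  fix x assume "x \<in> carrier K"
  then obtain k where "k \<in> carrier K" "x = psi h (\<sigma> k)"
    using inv_into_\<sigma>_psi[OF h] by metis
  then show "u \<otimes> x \<otimes> inv u = v \<otimes> x \<otimes> inv v"
    using u v by (simp add: twisted_conjugator_def)
qed

lemma twisted_conjugator_if_extension:
  assumes hom: "\<alpha> \<in> hom (semidirect_prod K H phi) (semidirect_prod K H phi)"
    and on_K: "\<forall>k \<in> carrier K. \<alpha> (k, \<one>\<^bsub>H\<^esub>) = (\<sigma> k, \<one>\<^bsub>H\<^esub>)"
    and on_H: "\<forall>h \<in> carrier H. snd (\<alpha> (\<one>, h)) = \<gamma> h"
    and h: "h \<in> carrier H"
  shows "twisted_conjugator h (fst (\<alpha> (\<one>, h)))"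
proof -
  define c where "c = fst (\<alpha> (\<one>, h))"
  have \<alpha>_h: "\<alpha> (\<one>, h) = (c, \<gamma> h)" and c: "c \<in> carrier K"
    using on_H h hom_in_carrier[OF hom, of "(\<one>, h)"] by (auto simp: c_def prod_eq_iff)
  have "\<sigma> (phi h k) = c \<otimes> psi h (\<sigma> k) \<otimes> inv c" if k: "k \<in> carrier K" for k
  proof -
    have "(\<one>, h) \<otimes>\<^bsub>semidirect_prod K H phi\<^esub> (k, \<one>\<^bsub>H\<^esub>)
        = (phi h k, \<one>\<^bsub>H\<^esub>) \<otimes>\<^bsub>semidirect_prod K H phi\<^esub> (\<one>, h)"
      using h k by simp
    then have "\<alpha> (\<one>, h) \<otimes>\<^bsub>semidirect_prod K H phi\<^esub> \<alpha> (k, \<one>\<^bsub>H\<^esub>)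
        = \<alpha> (phi h k, \<one>\<^bsub>H\<^esub>) \<otimes>\<^bsub>semidirect_prod K H phi\<^esub> \<alpha> (\<one>, h)"
      using h k by (simp flip: hom_mult[OF hom])
    then have "c \<otimes> psi h (\<sigma> k) = \<sigma> (phi h k) \<otimes> c"
      using \<alpha>_h on_K c h k by simp
    then show ?thesis
      using c h k by (simp add: inv_solve_right)
  qed
  then show ?thesis
    using c by (simp add: twisted_conjugator_def c_def)
qed

definition extension :: "('b \<Rightarrow> 'a) \<Rightarrow> 'a \<times> 'b \<Rightarrow> 'a \<times> 'b"
  where "extension c = (\<lambda>(k, h). (\<sigma> k \<otimes> c h, \<gamma> h))"

context
  fixes c :: "'b \<Rightarrow> 'a"
  assumes twisted_conj: "\<And>h. h \<in> carrier H \<Longrightarrow> twisted_conjugator h (c h)"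
    and crossed: "\<And>a b. a \<in> carrier H \<Longrightarrow> b \<in> carrier H \<Longrightarrow> c (a \<otimes>\<^bsub>H\<^esub> b) = c a \<otimes> psi a (c b)"
begin

lemma crossed_hom_closed: "h \<in> carrier H \<Longrightarrow> c h \<in> carrier K"
  using twisted_conj by (rule twisted_conjugator_closed)

lemma crossed_hom_one: "c \<one>\<^bsub>H\<^esub> = \<one>"
proof -
  have "c \<one>\<^bsub>H\<^esub> = c \<one>\<^bsub>H\<^esub> \<otimes> c \<one>\<^bsub>H\<^esub>"
    using crossed[of "\<one>\<^bsub>H\<^esub>" "\<one>\<^bsub>H\<^esub>"]
    by (simp only: H.one_closed H.l_one \<gamma>_one phi_H_one crossed_hom_closed simp_thms)
  then show ?thesis
    using l_cancel_one'[OF crossed_hom_closed crossed_hom_closed] by simp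
qed

lemma extension_hom: "extension c \<in> hom (semidirect_prod K H phi) (semidirect_prod K H phi)"
proof (rule homI)
  fix x y assume "x \<in> carrier (semidirect_prod K H phi)" "y \<in> carrier (semidirect_prod K H phi)"
  then obtain k1 h1 k2 h2 where xy: "x = (k1, h1)" "y = (k2, h2)"
    and k: "k1 \<in> carrier K" "k2 \<in> carrier K" and h: "h1 \<in> carrier H" "h2 \<in> carrier H"
    by auto
  have "\<sigma> (k1 \<otimes> phi h1 k2) \<otimes> c (h1 \<otimes>\<^bsub>H\<^esub> h2)
      = \<sigma> k1 \<otimes> (c h1 \<otimes> psi h1 (\<sigma> k2) \<otimes> inv (c h1)) \<otimes> (c h1 \<otimes> psi h1 (c h2))"
    using twisted_conj[OF h(1)] k h by (simp add: crossed twisted_conjugator_def)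
  also have "\<dots> = \<sigma> k1 \<otimes> c h1 \<otimes> psi h1 (\<sigma> k2 \<otimes> c h2)"
    using k h crossed_hom_closed by (simp add: m_assoc)
  finally show "extension c (x \<otimes>\<^bsub>semidirect_prod K H phi\<^esub> y)
      = extension c x \<otimes>\<^bsub>semidirect_prod K H phi\<^esub> extension c y"
    using k h by (simp add: xy extension_def)
qed (auto simp: extension_def crossed_hom_closed)

lemma extension_iso: "extension c \<in> iso (semidirect_prod K H phi) (semidirect_prod K H phi)"
proof (rule isoI[OF extension_hom])
  have "inj_on (extension c) (carrier (semidirect_prod K H phi))"
  proof (rule inj_onI, clarsimp)
    fix k1 h1 k2 h2
    assume k: "k1 \<in> carrier K" "k2 \<in> carrier K" and h: "h1 \<in> carrier H" "h2 \<in> carrier H"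
      and eq: "extension c (k1, h1) = extension c (k2, h2)"
    have "h1 = h2"
      using eq h \<gamma>_iso by (simp add: extension_def iso_iff inj_on_def)
    moreover from this have "\<sigma> k1 = \<sigma> k2"
      using eq k h crossed_hom_closed by (simp add: extension_def)
    then have "k1 = k2"
      using k \<sigma>_iso by (simp add: iso_iff inj_on_def)
    ultimately show "k1 = k2 \<and> h1 = h2"
      by simp
  qed
  then show "bij_betw (extension c) (carrier (semidirect_prod K H phi)) (carrier (semidirect_prod K H phi))"
    using endo_inj_surj[of "carrier (semidirect_prod K H phi)"] hom_carrier[OF extension_hom]
      frobenius by (simp add: bij_betw_def frobenius_action_def)
qed

lemma extension_if_crossed_hom:
  "\<exists>\<alpha> \<in> iso (semidirect_prod K H phi) (semidirect_prod K H phi).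
    (\<forall>k \<in> carrier K. \<alpha> (k, \<one>\<^bsub>H\<^esub>) = (\<sigma> k, \<one>\<^bsub>H\<^esub>)) \<and> (\<forall>h \<in> carrier H. snd (\<alpha> (\<one>, h)) = \<gamma> h)"
  using extension_iso crossed_hom_one by (intro bexI[of _ "extension c"]) (simp_all add: extension_def)

end

end

locale twisted_conjugator_family = frobenius_automorphisms +
  fixes g
  assumes g_twisted_conjugator: "\<And>h. h \<in> carrier H \<Longrightarrow> twisted_conjugator h (g h)"
begin

lemma g_closed [simp]: "h \<in> carrier H \<Longrightarrow> g h \<in> carrier K"
  by (rule twisted_conjugator_closed[OF g_twisted_conjugator])

definition defect
  where "defect a b = g a \<otimes> psi a (g b) \<otimes> inv (g (a \<otimes>\<^bsub>H\<^esub> b))"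

lemma defect_center:
  assumes a: "a \<in> carrier H" and b: "b \<in> carrier H"
  shows "defect a b \<in> center K"
proof -
  have "twisted_conjugator (a \<otimes>\<^bsub>H\<^esub> b) (g a \<otimes> psi a (g b))"
    using a b by (intro twisted_conjugator_mult g_twisted_conjugator)
  then show ?thesis
    using twisted_conjugator_unique_mod_center[OF _ _ g_twisted_conjugator] a b by (simp add: defect_def)
qed

lemma defect_closed [simp]: "a \<in> carrier H \<Longrightarrow> b \<in> carrier H \<Longrightarrow> defect a b \<in> carrier K"
  by (simp add: defect_def)

lemma g_mult: "a \<in> carrier H \<Longrightarrow> b \<in> carrier H \<Longrightarrow> g a \<otimes> psi a (g b) = defect a b \<otimes> g (a \<otimes>\<^bsub>H\<^esub> b)"
  by (simp add: defect_def m_assoc)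

lemma defect_cocycle:
  assumes a: "a \<in> carrier H" and b: "b \<in> carrier H" and c: "c \<in> carrier H"
  shows "psi a (defect b c) \<otimes> defect a (b \<otimes>\<^bsub>H\<^esub> c) = defect a b \<otimes> defect (a \<otimes>\<^bsub>H\<^esub> b) c"
proof -
  have central: "psi a (defect b c) \<otimes> g a = g a \<otimes> psi a (defect b c)"
    using center_commute[OF psi_center_closed[OF a defect_center[OF b c]], of "g a"] a by simp
  have "psi a (defect b c) \<otimes> defect a (b \<otimes>\<^bsub>H\<^esub> c)
      = (psi a (defect b c) \<otimes> g a) \<otimes> psi a (g (b \<otimes>\<^bsub>H\<^esub> c)) \<otimes> inv (g (a \<otimes>\<^bsub>H\<^esub> b \<otimes>\<^bsub>H\<^esub> c))"
    using a b c by (simp add: defect_def m_assoc H.m_assoc)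
  also have "\<dots> = g a \<otimes> psi a (defect b c \<otimes> g (b \<otimes>\<^bsub>H\<^esub> c)) \<otimes> inv (g (a \<otimes>\<^bsub>H\<^esub> b \<otimes>\<^bsub>H\<^esub> c))"
    using a b c by (simp add: central m_assoc)
  also have "\<dots> = g a \<otimes> psi a (g b) \<otimes> psi (a \<otimes>\<^bsub>H\<^esub> b) (g c) \<otimes> inv (g (a \<otimes>\<^bsub>H\<^esub> b \<otimes>\<^bsub>H\<^esub> c))"
    using a b c by (simp add: g_mult[symmetric] phi.composition_rule m_assoc)
  also have "\<dots> = defect a b \<otimes> g (a \<otimes>\<^bsub>H\<^esub> b) \<otimes> psi (a \<otimes>\<^bsub>H\<^esub> b) (g c) \<otimes> inv (g (a \<otimes>\<^bsub>H\<^esub> b \<otimes>\<^bsub>H\<^esub> c))"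
    using a b c by (simp add: g_mult)
  also have "\<dots> = defect a b \<otimes> defect (a \<otimes>\<^bsub>H\<^esub> b) c"
    using a b c by (simp add: defect_def[of "a \<otimes>\<^bsub>H\<^esub> b" c] m_assoc)
  finally show ?thesis .
qed

lemma corrected_crossed_hom:
  assumes z_center: "\<And>a. a \<in> carrier H \<Longrightarrow> z a \<in> center K"
    and z_mult: "\<And>a b. a \<in> carrier H \<Longrightarrow> b \<in> carrier H \<Longrightarrow>
      z (a \<otimes>\<^bsub>H\<^esub> b) = defect a b \<otimes> psi a (z b) \<otimes> z a"
    and a: "a \<in> carrier H" and b: "b \<in> carrier H"
  shows "z (a \<otimes>\<^bsub>H\<^esub> b) \<otimes> g (a \<otimes>\<^bsub>H\<^esub> b) = z a \<otimes> g a \<otimes> psi a (z b \<otimes> g b)"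
proof -
  have za: "z a \<in> center K" and pzb: "psi a (z b) \<in> center K" and d: "defect a b \<in> center K"
    using a b z_center psi_center_closed defect_center by simp_all
  note closed = center_closed[OF za] center_closed[OF pzb] center_closed[OF d]
    center_closed[OF z_center[OF b]]
  have "z a \<otimes> g a \<otimes> psi a (z b \<otimes> g b) = z a \<otimes> (g a \<otimes> psi a (z b)) \<otimes> psi a (g b)"
    using a b closed by (simp add: m_assoc)
  also have "\<dots> = z a \<otimes> psi a (z b) \<otimes> defect a b \<otimes> g (a \<otimes>\<^bsub>H\<^esub> b)"
    using a b closed by (simp add: center_commute[OF pzb, of "g a", symmetric] g_mult m_assoc)
  also have "z a \<otimes> psi a (z b) \<otimes> defect a b = defect a b \<otimes> (psi a (z b) \<otimes> z a)"
    using closed by (simp add: center_commute[OF d] center_commute[OF za])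
  also have "\<dots> = z (a \<otimes>\<^bsub>H\<^esub> b)"
    using a b closed by (simp add: z_mult m_assoc)
  finally show ?thesis ..
qed

lemma crossed_hom_exists:
  obtains c where "\<And>h. h \<in> carrier H \<Longrightarrow> twisted_conjugator h (c h)"
    and "\<And>a b. a \<in> carrier H \<Longrightarrow> b \<in> carrier H \<Longrightarrow> c (a \<otimes>\<^bsub>H\<^esub> b) = c a \<otimes> psi a (c b)"
proof -
  interpret Z: comm_group "K\<lparr>carrier := center K\<rparr>"
    by (rule comm_group_center)
  have finite: "finite (carrier K)" "finite (carrier H)"
    using frobenius by (simp_all add: frobenius_action_def)
  obtain z where z_center: "\<And>a. a \<in> carrier H \<Longrightarrow> z a \<in> center K"
    and z_mult: "\<And>a b. a \<in> carrier H \<Longrightarrow> b \<in> carrier H \<Longrightarrow>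
      z (a \<otimes>\<^bsub>H\<^esub> b) = defect a b \<otimes> psi a (z b) \<otimes> z a"
  proof (rule Z.two_cocycle_is_coboundary[of H psi defect "(order K - 1) div order H"])
    show "psi a \<in> hom (K\<lparr>carrier := center K\<rparr>) (K\<lparr>carrier := center K\<rparr>)" if "a \<in> carrier H" for a
      using that by (auto simp: hom_def psi_center_closed center_closed)
    show "x [^]\<^bsub>K\<lparr>carrier := center K\<rparr>\<^esub> (order H * ((order K - 1) div order H))
        = inv\<^bsub>K\<lparr>carrier := center K\<rparr>\<^esub> x" if "x \<in> carrier (K\<lparr>carrier := center K\<rparr>)" for x
      using that order_H_dvd_order_K_minus_one pow_order_minus_one[OF finite(1) center_closed[OF that[simplified]]]
      by (simp add: subgroup_center flip: nat_pow_consistent)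
  qed (use finite defect_center defect_cocycle in auto)
  show thesis
  proof (rule that[of "\<lambda>h. z h \<otimes> g h"])
    show "twisted_conjugator h (z h \<otimes> g h)" if "h \<in> carrier H" for h
      using that by (simp add: twisted_conjugator_center_mult g_twisted_conjugator z_center)
    show "z (a \<otimes>\<^bsub>H\<^esub> b) \<otimes> g (a \<otimes>\<^bsub>H\<^esub> b) = z a \<otimes> g a \<otimes> psi a (z b \<otimes> g b)"
      if "a \<in> carrier H" "b \<in> carrier H" for a b
      using corrected_crossed_hom[OF z_center z_mult that] .
  qed
qed

end

context frobenius_automorphisms
begin

theorem extension_exists_iff_Inn:
  "(\<exists>\<alpha> \<in> iso (semidirect_prod K H phi) (semidirect_prod K H phi).
      (\<forall>k \<in> carrier K. \<alpha> (k, \<one>\<^bsub>H\<^esub>) = (\<sigma> k, \<one>\<^bsub>H\<^esub>)) \<and> (\<forall>h \<in> carrier H. snd (\<alpha> (\<one>, h)) = \<gamma> h))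
   \<longleftrightarrow> (\<forall>h \<in> carrier H. (\<lambda>k \<in> carrier K. \<sigma> (phi h (inv_into (carrier K) \<sigma>
      (inv_into (carrier K) (phi (\<gamma> h)) k)))) \<in> Inn K)"
  (is "?extension \<longleftrightarrow> ?inner")
proof
  assume ?extension
  then obtain \<alpha> where \<alpha>: "\<alpha> \<in> hom (semidirect_prod K H phi) (semidirect_prod K H phi)"
    and on_K: "\<forall>k \<in> carrier K. \<alpha> (k, \<one>\<^bsub>H\<^esub>) = (\<sigma> k, \<one>\<^bsub>H\<^esub>)"
    and on_H: "\<forall>h \<in> carrier H. snd (\<alpha> (\<one>, h)) = \<gamma> h"
    using iso_iff by blast
  show ?inner
  proof
    fix h assume h: "h \<in> carrier H"
    then have "twisted_conjugator h (fst (\<alpha> (\<one>, h)))"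
      by (rule twisted_conjugator_if_extension[OF \<alpha> on_K on_H])
    then show "(\<lambda>k \<in> carrier K. \<sigma> (phi h (inv_into (carrier K) \<sigma>
      (inv_into (carrier K) (phi (\<gamma> h)) k)))) \<in> Inn K"
      using Inn_iff_twisted_conjugator[OF h] by blast
  qed
next
  assume ?inner
  then have "\<forall>h \<in> carrier H. \<exists>c. twisted_conjugator h c"
    using Inn_iff_twisted_conjugator by blast
  then obtain g where g: "\<forall>h \<in> carrier H. twisted_conjugator h (g h)"
    by (rule bchoice[THEN exE])
  interpret twisted_conjugator_family K H phi \<sigma> \<gamma> g
    by unfold_locales (use g in blast)
  obtain c where "\<And>h. h \<in> carrier H \<Longrightarrow> twisted_conjugator h (c h)"
    and "\<And>a b. a \<in> carrier H \<Longrightarrow> b \<in> carrier H \<Longrightarrow> c (a \<otimes>\<^bsub>H\<^esub> b) = c a \<otimes> psi a (c b)"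
    using crossed_hom_exists by blast
  then show ?extension
    by (rule extension_if_crossed_hom)
qed

end

theorem theorem3p3:
  fixes K :: "('a, 'c) monoid_scheme" and H :: "('b, 'd) monoid_scheme"
    and phi :: "'b \<Rightarrow> 'a \<Rightarrow> 'a" and \<sigma> :: "'a \<Rightarrow> 'a" and \<gamma> :: "'b \<Rightarrow> 'b"
  assumes "frobenius_action K H phi"
    and "\<sigma> \<in> iso K K"
    and "\<gamma> \<in> iso H H"
  shows "(\<exists>\<alpha> \<in> iso (semidirect_prod K H phi) (semidirect_prod K H phi).
            (\<forall>k \<in> carrier K. \<alpha> (k, \<one>\<^bsub>H\<^esub>) = (\<sigma> k, \<one>\<^bsub>H\<^esub>)) \<and>
            (\<forall>h \<in> carrier H. snd (\<alpha> (\<one>\<^bsub>K\<^esub>, h)) = \<gamma> h))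
     \<longleftrightarrow>
     (\<forall>h \<in> carrier H.
        (\<lambda>k \<in> carrier K. \<sigma> (phi h (inv_into (carrier K) \<sigma>
                 (inv_into (carrier K) (phi (\<gamma> h)) k)))) \<in> Inn K)"
proof -
  interpret frobenius_automorphisms K H phi \<sigma> \<gamma>
    using assms by unfold_locales
  show ?thesis
    by (rule extension_exists_iff_Inn)
qed

end
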